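(* Let $S=\{z_1,\dots,z_n\}$ be fixed, $f:\mathbb R^d\times\mathcal Z\to\mathbb R_+$ differentiable in $\mathbf w$, and assume $F_S(\mathbf w)=\frac1n\sum_i f(\mathbf w;z_i)$ is $L$-smooth. Let $\alpha\in(1,2]$, $G>0$ and assume at every iterate $\mathbf w_t$ of clipped SGDM (defined in the context) that $\mathbb E_{j_t}[\|\nabla f(\mathbf w_t;z_{j_t})\|^\alpha]\le G^\alpha$. Choose parameters $1-\gamma=s\,T^{-\frac{\alpha}{3\alpha-2}}$, $\tau_1=\frac{pG}{(1-\gamma)^{1/\alpha}}$, $\eta_t=\eta=q\,T^{-\frac{\alpha}{3\alpha-2}}$ and $\tau_2=r\,T^{-\frac{\alpha-1}{3\alpha-2}}$ for positive constants $p,s,q,r$ with $1-\gamma\le 1$. Then there is a constant $C$ not depending on $T$ or $\delta$ such that for any $\delta\in(0,1)$, with probability at least $1-\delta$, $$\frac1T\sum_{t=1}^T\|\nabla F_S(\mathbf w_t)\|\le C\,\frac{\log(T/\delta)}{T^{\frac{\alpha-1}{3\alpha-2}}}.$$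
   Context: The clipping operator is $\mathrm{clip}_\tau(g)=\frac{g}{\|g\|}\min\{\tau,\|g\|\}$. Clipped SGDM with momentum parameter $\gamma\in[0,1)$ and clipping parameters $\tau_1,\tau_2>0$: set $\mathbf w_1=0$, $\mathbf m_0=0$; for $t=1,\dots,T$, draw $j_t$ uniformly from $\{1,\dots,n\}$ independently of the past, set $\nabla\bar f(\mathbf w_t;z_{j_t})=\mathrm{clip}_{\tau_1}(\nabla f(\mathbf w_t;z_{j_t}))$, $\mathbf m_t=\gamma\mathbf m_{t-1}+(1-\gamma)\nabla\bar f(\mathbf w_t;z_{j_t})$, $\bar{\mathbf m}_t=\mathrm{clip}_{\tau_2}(\mathbf m_t)$, and $\mathbf w_{t+1}=\mathbf w_t-\eta_t\bar{\mathbf m}_t$. $\mathbb E_{j_t}$ is the conditional expectation over $j_t$. *)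

theory Defs
  imports "HOL-Analysis.Analysis" "HOL-Probability.Probability"
begin

text \<open>Clipping operator: clip tau g = (g / norm g) * min tau (norm g); with the
  convention x / 0 = 0 this gives clip tau 0 = 0.\<close>
definition clip :: "real \<Rightarrow> 'a::real_normed_vector \<Rightarrow> 'a" where
  "clip \<tau> g = (min \<tau> (norm g) / norm g) *\<^sub>R g"

text \<open>State of clipped SGDM. gf w z is the gradient of f(.;z) at w, zs the data,
  js the sampled index sequence (js t = j_t).
  sgdm_state ... 0 = (w_1, m_0) = (0, 0) and sgdm_state ... k = (w_(k+1), m_k).\<close>
fun sgdm_state ::
  "('a::real_normed_vector \<Rightarrow> 'z \<Rightarrow> 'a) \<Rightarrow> (nat \<Rightarrow> 'z) \<Rightarrow> real \<Rightarrow> real \<Rightarrow> real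
   \<Rightarrow> (nat \<Rightarrow> real) \<Rightarrow> (nat \<Rightarrow> nat) \<Rightarrow> nat \<Rightarrow> 'a \<times> 'a" where
  "sgdm_state gf zs \<gamma> \<tau>1 \<tau>2 \<eta> js 0 = (0, 0)"
| "sgdm_state gf zs \<gamma> \<tau>1 \<tau>2 \<eta> js (Suc k) =
     (let (w, m) = sgdm_state gf zs \<gamma> \<tau>1 \<tau>2 \<eta> js k;
          t = Suc k;
          gbar = clip \<tau>1 (gf w (zs (js t)));
          m' = \<gamma> *\<^sub>R m + (1 - \<gamma>) *\<^sub>R gbar;
          w' = w - \<eta> t *\<^sub>R clip \<tau>2 m'
      in (w', m'))"

definition sgdm_iter ::
  "('a::real_normed_vector \<Rightarrow> 'z \<Rightarrow> 'a) \<Rightarrow> (nat \<Rightarrow> 'z) \<Rightarrow> real \<Rightarrow> real \<Rightarrow> real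
   \<Rightarrow> (nat \<Rightarrow> real) \<Rightarrow> (nat \<Rightarrow> nat) \<Rightarrow> nat \<Rightarrow> 'a" where
  "sgdm_iter gf zs \<gamma> \<tau>1 \<tau>2 \<eta> js t = fst (sgdm_state gf zs \<gamma> \<tau>1 \<tau>2 \<eta> js (t - 1))"

definition index_law :: "nat \<Rightarrow> nat \<Rightarrow> (nat \<Rightarrow> nat) pmf" where
  "index_law n T = Pi_pmf {1..T} 0 (\<lambda>_. pmf_of_set {1..n})"

end

theory Submission
  imports Defs
begin

(* By the descent lemma for the L-smooth F_S, each clipped step earns eta tau2 |grad F_S(w_t)| at
   the price of the decrease of F_S, of 2 eta tau2 |m_t - grad F_S(w_t)| and of O(eta tau2^2).
   The momentum error is the exponentially averaged noise Z_t = (1-gamma) sum_k gamma^(t-k) zeta_k,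
   zeta_k being the deviation of the sampled clipped gradient from its mean over the data, plus a
   deterministic part bounded by the drift L eta tau2/(1-gamma) and the clipping bias
   G^alpha/tau1^(alpha-1). The moment hypothesis bounds every per-sample gradient by a constant
   depending on n only, so the zeta_k are bounded martingale differences in the sampled indices:
   Azuma-Hoeffding and a union bound over iterations and coordinates give
   |Z_t| = O(sqrt((1-gamma) log(T/delta))) with probability 1-delta. Under the schedule every
   term is O(log(T/delta) / T^((alpha-1)/(3 alpha-2))). *)

section \<open>Azuma--Hoeffding for uniformly sampled indices\<close>

lemma set_pmf_index_law:
  assumes "n \<ge> 1"
  shows "f \<in> set_pmf (index_law n T) \<longleftrightarrow>
    (\<forall>x. (x \<in> {1..T} \<longrightarrow> f x \<in> {1..n}) \<and> (x \<notin> {1..T} \<longrightarrow> f x = 0))"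
  using assms by (auto simp: index_law_def set_Pi_pmf PiE_dflt_def)

lemma index_law_Suc:
  "index_law n (Suc T) =
     map_pmf (\<lambda>(y, f). f(Suc T := y)) (pair_pmf (pmf_of_set {1..n}) (index_law n T))"
proof -
  have "{1..Suc T} = insert (Suc T) {1..T}" by auto
  thus ?thesis unfolding index_law_def by (simp add: Pi_pmf_insert)
qed

lemma fun_upd_in_set_pmf_index_law:
  assumes "n \<ge> 1" "f \<in> set_pmf (index_law n T)" "y \<in> {1..n}"
  shows "f(Suc T := y) \<in> set_pmf (index_law n (Suc T))"
proof -
  have "(x \<in> {1..Suc T} \<longrightarrow> (f(Suc T := y)) x \<in> {1..n}) \<and> (x \<notin> {1..Suc T} \<longrightarrow> (f(Suc T := y)) x = 0)"
    for x
  proof (cases "x = Suc T")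
    case False
    hence "(x \<in> {1..Suc T}) = (x \<in> {1..T})" by auto
    thus ?thesis using assms(2) False unfolding set_pmf_index_law[OF assms(1)] by simp
  qed (use assms(3) in simp)
  thus ?thesis unfolding set_pmf_index_law[OF assms(1)] by blast
qed

lemma index_law_prefix_extend:
  assumes n: "n \<ge> 1" and f: "f \<in> set_pmf (index_law n k)" and kT: "k \<le> T"
  shows "\<exists>f'\<in>set_pmf (index_law n T). \<forall>i\<le>k. f' i = f i"
proof
  define f' where "f' i = (if i \<le> k then f i else if i \<le> T then 1 else 0)" for i
  show "\<forall>i\<le>k. f' i = f i" by (simp add: f'_def)
  have "(x \<in> {1..T} \<longrightarrow> f' x \<in> {1..n}) \<and> (x \<notin> {1..T} \<longrightarrow> f' x = 0)" for x
  proof (cases "x \<le> k")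
    case True
    thus ?thesis using f kT unfolding set_pmf_index_law[OF n] by (auto simp: f'_def)
  qed (use n kT in \<open>auto simp: f'_def\<close>)
  thus "f' \<in> set_pmf (index_law n T)" unfolding set_pmf_index_law[OF n] by blast
qed

lemma uniform_mgf_le:
  fixes h :: "nat \<Rightarrow> real"
  assumes n: "n \<ge> 1" and mean0: "(\<Sum>y\<in>{1..n}. h y) = 0"
    and bounded: "\<And>y. y \<in> {1..n} \<Longrightarrow> \<bar>h y\<bar> \<le> c" and l: "l \<ge> 0"
  shows "(\<integral>\<^sup>+y. ennreal (exp (l * h y)) \<partial>measure_pmf (pmf_of_set {1..n}))
           \<le> ennreal (exp (l\<^sup>2 * c\<^sup>2 / 2))"
proof (cases "l = 0")
  case True
  thus ?thesis by (simp add: measure_pmf.emeasure_space_1)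
next
  case False
  hence lp: "l > 0" using l by simp
  have ne: "{1..n} \<noteq> {}" using n by auto
  interpret interval_bounded_random_variable "measure_pmf (pmf_of_set {1..n})" h "-c" c
  proof unfold_locales
    show "AE x in measure_pmf (pmf_of_set {1..n}). h x \<in> {- c..c}"
      using bounded ne by (fastforce simp: AE_measure_pmf_iff abs_le_iff)
  qed simp
  have "measure_pmf.expectation (pmf_of_set {1..n}) h = 0"
    using ne mean0 by (simp add: integral_pmf_of_set)
  from Hoeffdings_lemma_nn_integral_0[OF lp this]
  have "(\<integral>\<^sup>+y. ennreal (exp (l * h y)) \<partial>measure_pmf (pmf_of_set {1..n}))
          \<le> ennreal (exp (l\<^sup>2 * (c - - c)\<^sup>2 / 8))" .
  also have "l\<^sup>2 * (c - - c)\<^sup>2 / 8 = l\<^sup>2 * c\<^sup>2 / 2" by (simp add: power2_eq_square algebra_simps)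
  finally show ?thesis .
qed

lemma nn_integral_index_law_Suc:
  "(\<integral>\<^sup>+f. h f \<partial>measure_pmf (index_law n (Suc T)))
     = (\<integral>\<^sup>+f. (\<integral>\<^sup>+y. h (f(Suc T := y)) \<partial>measure_pmf (pmf_of_set {1..n})) \<partial>measure_pmf (index_law n T))"
  unfolding index_law_Suc by (subst pair_commute_pmf) (simp add: nn_integral_pair_pmf' case_prod_beta)

lemma nn_integral_exp_fun_upd_le:
  fixes X :: "nat \<Rightarrow> (nat \<Rightarrow> nat) \<Rightarrow> real" and a :: "nat \<Rightarrow> real"
  assumes n: "n \<ge> 1"
    and adapted: "\<And>k f g. (\<And>i. i \<le> k \<Longrightarrow> f i = g i) \<Longrightarrow> X k f = X k g"
    and mean0: "(\<Sum>y\<in>{1..n}. X (Suc T) (f(Suc T := y))) = 0"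
    and bounded: "\<And>y. y \<in> {1..n} \<Longrightarrow> \<bar>X (Suc T) (f(Suc T := y))\<bar> \<le> c"
    and a: "a (Suc T) \<ge> 0"
  shows "(\<integral>\<^sup>+y. ennreal (exp (\<Sum>k=1..Suc T. a k * X k (f(Suc T := y)))) \<partial>measure_pmf (pmf_of_set {1..n}))
           \<le> ennreal (exp (\<Sum>k=1..T. a k * X k f)) * ennreal (exp ((a (Suc T))\<^sup>2 * c\<^sup>2 / 2))"
proof -
  let ?S = "\<Sum>k=1..T. a k * X k f"
  have "(\<Sum>k=1..T. a k * X k (f(Suc T := y))) = ?S" for y
    by (intro sum.cong refl arg_cong[where f = "(*) _"] adapted) auto
  hence "(\<integral>\<^sup>+y. ennreal (exp (\<Sum>k=1..Suc T. a k * X k (f(Suc T := y)))) \<partial>measure_pmf (pmf_of_set {1..n}))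
      = ennreal (exp ?S) * (\<integral>\<^sup>+y. ennreal (exp (a (Suc T) * X (Suc T) (f(Suc T := y))))
                              \<partial>measure_pmf (pmf_of_set {1..n}))"
    by (simp add: exp_add ennreal_mult nn_integral_cmult)
  also have "\<dots> \<le> ennreal (exp ?S) * ennreal (exp ((a (Suc T))\<^sup>2 * c\<^sup>2 / 2))"
    by (rule mult_left_mono[OF uniform_mgf_le[OF n mean0 bounded a] zero_le])
  finally show ?thesis .
qed

text \<open>Azuma--Hoeffding for the index sequence: \<open>X k\<close> depends only on the first \<open>k\<close>
  indices and has mean zero over the \<open>k\<close>-th one, i.e.\ the \<open>X k\<close> are bounded martingale
  differences.\<close>

lemma index_law_mgf_le:
  fixes X :: "nat \<Rightarrow> (nat \<Rightarrow> nat) \<Rightarrow> real" and a :: "nat \<Rightarrow> real"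
  assumes n: "n \<ge> 1"
    and adapted: "\<And>k f g. (\<And>i. i \<le> k \<Longrightarrow> f i = g i) \<Longrightarrow> X k f = X k g"
    and mean0: "\<And>k f. 1 \<le> k \<Longrightarrow> k \<le> T \<Longrightarrow> f \<in> set_pmf (index_law n (k - 1)) \<Longrightarrow>
                  (\<Sum>y\<in>{1..n}. X k (f(k := y))) = 0"
    and bounded: "\<And>k f. 1 \<le> k \<Longrightarrow> k \<le> T \<Longrightarrow> f \<in> set_pmf (index_law n k) \<Longrightarrow> \<bar>X k f\<bar> \<le> c"
    and a: "\<And>k. a k \<ge> 0"
  shows "(\<integral>\<^sup>+f. ennreal (exp (\<Sum>k=1..T. a k * X k f)) \<partial>measure_pmf (index_law n T))
           \<le> ennreal (exp ((\<Sum>k=1..T. (a k)\<^sup>2) * c\<^sup>2 / 2))"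
  using mean0 bounded
proof (induction T)
  case 0
  thus ?case by (simp add: index_law_def)
next
  case (Suc T)
  let ?P = "measure_pmf (index_law n T)"
  let ?K = "exp ((a (Suc T))\<^sup>2 * c\<^sup>2 / 2)"
  have "(\<integral>\<^sup>+f. ennreal (exp (\<Sum>k=1..Suc T. a k * X k f)) \<partial>measure_pmf (index_law n (Suc T)))
      \<le> (\<integral>\<^sup>+f. ennreal (exp (\<Sum>k=1..T. a k * X k f)) * ennreal ?K \<partial>?P)"
    unfolding nn_integral_index_law_Suc
  proof (intro nn_integral_mono_AE, unfold AE_measure_pmf_iff, intro ballI nn_integral_exp_fun_upd_le
      [OF n adapted] a)
    fix f y assume f: "f \<in> set_pmf (index_law n T)"
    show "(\<Sum>y\<in>{1..n}. X (Suc T) (f(Suc T := y))) = 0"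
      using Suc.prems(1)[of "Suc T" f] f by (simp del: fun_upd_apply)
    assume "y \<in> {1..n}"
    thus "\<bar>X (Suc T) (f(Suc T := y))\<bar> \<le> c"
      using Suc.prems(2)[of "Suc T"] fun_upd_in_set_pmf_index_law[OF n f] by simp
  qed
  also have "\<dots> = (\<integral>\<^sup>+f. ennreal (exp (\<Sum>k=1..T. a k * X k f)) \<partial>?P) * ennreal ?K"
    by (rule nn_integral_multc) simp
  also have "\<dots> \<le> ennreal (exp ((\<Sum>k=1..T. (a k)\<^sup>2) * c\<^sup>2 / 2)) * ennreal ?K"
    by (intro mult_right_mono Suc.IH) (use Suc.prems in auto)
  also have "\<dots> = ennreal (exp ((\<Sum>k=1..Suc T. (a k)\<^sup>2) * c\<^sup>2 / 2))"
  proof -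
    have "(\<Sum>k=1..Suc T. (a k)\<^sup>2) * c\<^sup>2 / 2 = (\<Sum>k=1..T. (a k)\<^sup>2) * c\<^sup>2 / 2 + (a (Suc T))\<^sup>2 * c\<^sup>2 / 2"
      by (simp add: algebra_simps add_divide_distrib)
    thus ?thesis by (simp only: exp_add ennreal_mult[symmetric] exp_ge_zero)
  qed
  finally show ?case .
qed

lemma index_law_azuma:
  fixes X :: "nat \<Rightarrow> (nat \<Rightarrow> nat) \<Rightarrow> real" and a :: "nat \<Rightarrow> real"
  assumes n: "n \<ge> 1"
    and adapted: "\<And>k f g. (\<And>i. i \<le> k \<Longrightarrow> f i = g i) \<Longrightarrow> X k f = X k g"
    and mean0: "\<And>k f. 1 \<le> k \<Longrightarrow> k \<le> T \<Longrightarrow> f \<in> set_pmf (index_law n (k - 1)) \<Longrightarrow>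
                  (\<Sum>y\<in>{1..n}. X k (f(k := y))) = 0"
    and bounded: "\<And>k f. 1 \<le> k \<Longrightarrow> k \<le> T \<Longrightarrow> f \<in> set_pmf (index_law n k) \<Longrightarrow> \<bar>X k f\<bar> \<le> c"
    and a: "\<And>k. a k \<ge> 0"
    and x: "x > 0" and V: "V > 0" "(\<Sum>k=1..T. (a k)\<^sup>2) * c\<^sup>2 \<le> V"
  shows "measure_pmf.prob (index_law n T) {f. (\<Sum>k=1..T. a k * X k f) \<ge> x} \<le> exp (- x\<^sup>2 / (2 * V))"
proof -
  define l where "l = x / V"
  have l: "l \<ge> 0" using x V unfolding l_def by simp
  let ?P = "measure_pmf (index_law n T)"
  let ?S = "\<lambda>f. \<Sum>k=1..T. a k * X k f"
  let ?A = "{f. ?S f \<ge> x}"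
  have chernoff: "indicator ?A f \<le> ennreal (exp (- l * x)) * ennreal (exp (\<Sum>k=1..T. (l * a k) * X k f))"
    for f
  proof -
    have "exp (- l * x) * exp (\<Sum>k=1..T. (l * a k) * X k f) = exp (l * (?S f - x))"
      by (simp add: exp_add[symmetric] sum_distrib_left right_diff_distrib mult.assoc)
    thus ?thesis using l by (auto simp: indicator_def ennreal_mult[symmetric])
  qed
  have "ennreal (measure_pmf.prob (index_law n T) ?A) = (\<integral>\<^sup>+f. indicator ?A f \<partial>?P)"
    by (simp add: measure_pmf.emeasure_eq_measure[symmetric])
  also have "\<dots> \<le> (\<integral>\<^sup>+f. ennreal (exp (- l * x)) * ennreal (exp (\<Sum>k=1..T. (l * a k) * X k f)) \<partial>?P)"
    by (intro nn_integral_mono chernoff)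
  also have "\<dots> = ennreal (exp (- l * x)) * (\<integral>\<^sup>+f. ennreal (exp (\<Sum>k=1..T. (l * a k) * X k f)) \<partial>?P)"
    by (rule nn_integral_cmult) simp
  also have "\<dots> \<le> ennreal (exp (- l * x)) * ennreal (exp ((\<Sum>k=1..T. (l * a k)\<^sup>2) * c\<^sup>2 / 2))"
    by (intro mult_left_mono index_law_mgf_le[OF n adapted mean0 bounded]) (use a l in auto)
  also have "\<dots> = ennreal (exp (- l * x + l\<^sup>2 * ((\<Sum>k=1..T. (a k)\<^sup>2) * c\<^sup>2) / 2))"
    by (simp add: ennreal_mult[symmetric] exp_add[symmetric] power_mult_distrib sum_distrib_left[symmetric])
  also have "\<dots> \<le> ennreal (exp (- l * x + l\<^sup>2 * V / 2))"
    using V(2) by (intro ennreal_leI) (simp add: mult_left_mono divide_right_mono)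
  also have "- l * x + l\<^sup>2 * V / 2 = - x\<^sup>2 / (2 * V)"
    using V unfolding l_def by (simp add: field_simps power2_eq_square)
  finally show ?thesis by (simp add: ennreal_le_iff)
qed

lemma clip_eq_self: "norm g \<le> \<tau> \<Longrightarrow> clip \<tau> g = g"
  by (cases "g = 0") (auto simp: clip_def min_def)

lemma clip_eq_scaleR: "\<tau> \<le> norm g \<Longrightarrow> clip \<tau> g = (\<tau> / norm g) *\<^sub>R g"
  by (auto simp: clip_def min_def)

lemma norm_clip_le: "\<tau> \<ge> 0 \<Longrightarrow> norm (clip \<tau> g) \<le> norm g"
  by (cases "norm g \<le> \<tau>") (auto simp: clip_eq_self clip_eq_scaleR divide_le_eq_1)

lemma norm_clip_le_threshold: "\<tau> \<ge> 0 \<Longrightarrow> norm (clip \<tau> g) \<le> \<tau>"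
  by (cases "norm g \<le> \<tau>") (auto simp: clip_eq_self clip_eq_scaleR)

lemma norm_clip_diff_le:
  assumes \<tau>: "\<tau> > 0" and \<alpha>: "1 < \<alpha>"
  shows "norm (clip \<tau> g - g) \<le> norm g powr \<alpha> / \<tau> powr (\<alpha> - 1)"
proof (cases "norm g \<le> \<tau>")
  case True thus ?thesis by (simp add: clip_eq_self)
next
  case False
  hence lt: "\<tau> < norm g" by simp
  hence gpos: "norm g > 0" using \<tau> by linarith
  have "clip \<tau> g - g = (\<tau> / norm g - 1) *\<^sub>R g" using lt by (simp add: clip_eq_scaleR algebra_simps)
  hence "norm (clip \<tau> g - g) = (1 - \<tau> / norm g) * norm g"
    using lt gpos by (simp add: abs_if divide_less_eq_1)
  also have "\<dots> \<le> norm g" using \<tau> gpos by (simp add: mult_le_cancel_right1)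
  also have "\<dots> \<le> norm g * (norm g / \<tau>) powr (\<alpha> - 1)"
  proof -
    have "1 \<le> (norm g / \<tau>) powr (\<alpha> - 1)"
      using lt \<tau> \<alpha> by (intro ge_one_powr_ge_zero) auto
    thus ?thesis using gpos by (simp add: mult_le_cancel_left1)
  qed
  also have "\<dots> = norm g powr \<alpha> / \<tau> powr (\<alpha> - 1)"
    using gpos \<tau> by (simp add: powr_divide powr_diff powr_one)
  finally show ?thesis .
qed

lemma norm_mean_clip_diff_le:
  fixes v :: "nat \<Rightarrow> 'a::real_normed_vector"
  assumes \<tau>: "\<tau> > 0" and \<alpha>: "1 < \<alpha>"
  shows "norm ((1 / real n) *\<^sub>R (\<Sum>j=1..n. clip \<tau> (v j) - v j))
           \<le> ((\<Sum>j=1..n. norm (v j) powr \<alpha>) / real n) / \<tau> powr (\<alpha> - 1)"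
proof -
  have "norm ((1 / real n) *\<^sub>R (\<Sum>j=1..n. clip \<tau> (v j) - v j))
          \<le> (1 / real n) * (\<Sum>j=1..n. norm (clip \<tau> (v j) - v j))"
    by (simp add: divide_right_mono norm_sum)
  also have "\<dots> \<le> (1 / real n) * (\<Sum>j=1..n. norm (v j) powr \<alpha> / \<tau> powr (\<alpha> - 1))"
    by (intro mult_left_mono sum_mono norm_clip_diff_le \<tau> \<alpha>) auto
  also have "\<dots> = ((\<Sum>j=1..n. norm (v j) powr \<alpha>) / real n) / \<tau> powr (\<alpha> - 1)"
    by (simp add: sum_divide_distrib[symmetric])
  finally show ?thesis .
qed

text \<open>Clipping the momentum still gives a descent direction up to the error \<open>m - u\<close>.\<close>

lemma inner_clip_ge:
  fixes u m :: "'a::real_inner"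
  assumes \<tau>: "\<tau> \<ge> 0"
  shows "u \<bullet> clip \<tau> m \<ge> \<tau> * norm u - 2 * \<tau> * norm (m - u) - \<tau>\<^sup>2 / 4"
proof -
  let ?e = "norm (m - u)"
  have um: "u \<bullet> m \<ge> norm m * norm m - ?e * norm m"
  proof -
    have "u \<bullet> m = m \<bullet> m + (u - m) \<bullet> m" by (simp add: inner_diff_left)
    moreover have "(u - m) \<bullet> m \<ge> - (norm (u - m) * norm m)"
      using Cauchy_Schwarz_ineq2[of "u - m" m] by (simp add: abs_le_iff)
    ultimately show ?thesis by (simp add: norm_minus_commute power2_norm_eq_inner[symmetric] power2_eq_square)
  qed
  have tri: "norm u \<le> norm m + ?e"
    using norm_triangle_ineq[of m "u - m"] by (simp add: norm_minus_commute)
  show ?thesis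
  proof (cases "norm m \<le> \<tau>")
    case True
    have "(\<tau> - norm m) * norm m \<le> \<tau>\<^sup>2 / 4"
      using sum_squares_ge_zero[of "\<tau> - 2 * norm m" 0] by (simp add: power2_eq_square algebra_simps)
    moreover have "(\<tau> - norm m) * ?e \<ge> 0" using True by simp
    moreover have "\<tau> * norm u \<le> \<tau> * norm m + \<tau> * ?e"
      using tri \<tau> by (simp add: mult_left_mono distrib_left[symmetric])
    ultimately show ?thesis using um True by (simp add: clip_eq_self algebra_simps)
  next
    case False
    hence mpos: "norm m > 0" using \<tau> by linarith
    have "norm m * norm u \<le> norm m * norm m + norm m * ?e"
      using mult_left_mono[OF tri norm_ge_zero] by (simp add: algebra_simps)
    hence "u \<bullet> m / norm m \<ge> norm u - 2 * ?e"
      using um mpos by (simp add: le_divide_eq algebra_simps)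
    hence "\<tau> * (u \<bullet> m / norm m) \<ge> \<tau> * (norm u - 2 * ?e)"
      using \<tau> by (intro mult_left_mono) auto
    moreover have "u \<bullet> clip \<tau> m = \<tau> * (u \<bullet> m / norm m)"
      using False by (simp add: clip_eq_scaleR)
    moreover have "\<tau> * (norm u - 2 * ?e) = \<tau> * norm u - 2 * \<tau> * ?e" by (simp add: algebra_simps)
    moreover have "\<tau>\<^sup>2 / 4 \<ge> 0" by simp
    ultimately show ?thesis by linarith
  qed
qed

lemma descent_lemma:
  fixes F :: "'a::real_inner \<Rightarrow> real" and D :: "'a \<Rightarrow> 'a"
  assumes deriv: "\<And>w. (F has_derivative (\<lambda>h. D w \<bullet> h)) (at w)"
    and lipschitz: "\<And>u v. norm (D u - D v) \<le> L * norm (u - v)"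
  shows "F y \<le> F x + D x \<bullet> (y - x) + L / 2 * (norm (y - x))\<^sup>2"
proof -
  define d where "d = y - x"
  define \<phi> where "\<phi> t = F (x + t *\<^sub>R d) - t * (D x \<bullet> d) - L / 2 * t\<^sup>2 * (norm d)\<^sup>2" for t :: real
  have "\<phi> 1 \<le> \<phi> 0"
  proof (rule DERIV_nonpos_imp_nonincreasing[of 0 1])
    fix t :: real assume t: "0 \<le> t" "t \<le> 1"
    have "((\<lambda>t. F (x + t *\<^sub>R d)) has_derivative (\<lambda>s. D (x + t *\<^sub>R d) \<bullet> (s *\<^sub>R d))) (at t)"
      by (rule has_derivative_compose[of "\<lambda>t. x + t *\<^sub>R d" "\<lambda>s. s *\<^sub>R d", OF _ deriv])
         (auto intro!: derivative_eq_intros)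
    moreover have "(\<lambda>s. D (x + t *\<^sub>R d) \<bullet> (s *\<^sub>R d)) = (*) (D (x + t *\<^sub>R d) \<bullet> d)"
      by (simp add: fun_eq_iff mult.commute)
    ultimately have "((\<lambda>t. F (x + t *\<^sub>R d)) has_real_derivative (D (x + t *\<^sub>R d) \<bullet> d)) (at t)"
      by (simp add: has_field_derivative_def)
    hence deriv_\<phi>: "(\<phi> has_real_derivative
        (D (x + t *\<^sub>R d) - D x) \<bullet> d - L * t * (norm d)\<^sup>2) (at t)"
      unfolding \<phi>_def by (auto intro!: derivative_eq_intros simp: inner_diff_left)
    have "(D (x + t *\<^sub>R d) - D x) \<bullet> d \<le> norm (D (x + t *\<^sub>R d) - D x) * norm d"
      by (rule norm_cauchy_schwarz)
    also have "\<dots> \<le> L * norm (t *\<^sub>R d) * norm d"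
      using lipschitz[of "x + t *\<^sub>R d" x] by (intro mult_right_mono) auto
    also have "\<dots> = L * t * (norm d)\<^sup>2" using t by (simp add: power2_eq_square)
    finally show "\<exists>y. (\<phi> has_real_derivative y) (at t) \<and> y \<le> 0"
      using deriv_\<phi> by force
  qed simp
  thus ?thesis unfolding \<phi>_def d_def by simp
qed

lemma geometric_recursion_bound:
  fixes e :: "nat \<Rightarrow> real"
  assumes \<gamma>: "0 \<le> \<gamma>" "\<gamma> < 1" and a: "a \<ge> 0"
    and step: "\<And>t. t < T \<Longrightarrow> e (Suc t) \<le> \<gamma> * e t + a"
  shows "t \<le> T \<Longrightarrow> e t \<le> \<gamma> ^ t * e 0 + a / (1 - \<gamma>)"
proof (induction t)
  case 0
  show ?case using \<gamma> a by simp
next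
  case (Suc t)
  have "e (Suc t) \<le> \<gamma> * (\<gamma> ^ t * e 0 + a / (1 - \<gamma>)) + a"
    using step[of t] Suc mult_left_mono[OF Suc.IH \<gamma>(1)] by simp
  also have "\<dots> = \<gamma> ^ Suc t * e 0 + a / (1 - \<gamma>)"
    using \<gamma> by (simp add: field_simps)
  finally show ?case .
qed

lemma sum_power_diff_le:
  fixes r :: real assumes "0 \<le> r" "r < 1"
  shows "(\<Sum>k=1..t. r ^ (t - k)) \<le> 1 / (1 - r)"
proof -
  have "(\<Sum>k=1..Suc i. r ^ (Suc i - k)) \<le> r * (\<Sum>k=1..i. r ^ (i - k)) + 1" for i
    by (simp add: sum_distrib_left Suc_diff_le)
  from geometric_recursion_bound[where e = "\<lambda>t. \<Sum>k=1..t. r ^ (t - k)" and T = t, OF assms _ this]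
  show ?thesis by simp
qed

lemma sum_power_le:
  fixes r :: real assumes "0 \<le> r" "r < 1"
  shows "(\<Sum>t=1..T. r ^ t) \<le> 1 / (1 - r)"
proof -
  have "(\<Sum>t=1..T. r ^ t) \<le> (\<Sum>t<Suc T. r ^ t)"
    by (rule sum_mono2) (use assms in auto)
  also have "\<dots> = (1 - r ^ Suc T) / (1 - r)"
    using assms by (simp only: sum_gp_strict) simp
  also have "\<dots> \<le> 1 / (1 - r)" using assms by (intro divide_right_mono) auto
  finally show ?thesis .
qed

locale clipped_sgdm =
  fixes gf :: "'a::euclidean_space \<Rightarrow> 'z \<Rightarrow> 'a" and zs :: "nat \<Rightarrow> 'z" and n :: nat
    and \<gamma> \<tau>1 \<tau>2 \<eta> :: real
  assumes n_pos: "1 \<le> n" and momentum: "0 \<le> \<gamma>" "\<gamma> < 1"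
    and thresholds_pos: "0 < \<tau>1" "0 < \<tau>2" and step_pos: "0 < \<eta>"
begin

definition state :: "(nat \<Rightarrow> nat) \<Rightarrow> nat \<Rightarrow> 'a \<times> 'a" where
  "state js = sgdm_state gf zs \<gamma> \<tau>1 \<tau>2 (\<lambda>_. \<eta>) js"

text \<open>Along the index sequence \<open>js\<close>, \<open>W js t\<close> and \<open>M js t\<close> are \<open>w\<^sub>t\<close> and \<open>m\<^sub>t\<close>, and
  \<open>gradF\<close> is \<open>\<nabla>F\<^sub>S\<close>; by truncated subtraction \<open>W js 0 = W js 1 = 0\<close>.\<close>

definition W :: "(nat \<Rightarrow> nat) \<Rightarrow> nat \<Rightarrow> 'a" where
  "W js t = fst (state js (t - 1))"

definition M :: "(nat \<Rightarrow> nat) \<Rightarrow> nat \<Rightarrow> 'a" where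
  "M js t = snd (state js t)"

definition gradF :: "'a \<Rightarrow> 'a" where
  "gradF w = (1 / real n) *\<^sub>R (\<Sum>i=1..n. gf w (zs i))"

definition gclip :: "(nat \<Rightarrow> nat) \<Rightarrow> nat \<Rightarrow> 'a" where
  "gclip js t = clip \<tau>1 (gf (W js t) (zs (js t)))"

definition gclip_mean :: "(nat \<Rightarrow> nat) \<Rightarrow> nat \<Rightarrow> 'a" where
  "gclip_mean js t = (1 / real n) *\<^sub>R (\<Sum>j=1..n. clip \<tau>1 (gf (W js t) (zs j)))"

definition noise :: "(nat \<Rightarrow> nat) \<Rightarrow> nat \<Rightarrow> 'a" where
  "noise js t = gclip js t - gclip_mean js t"

definition noise_avg :: "(nat \<Rightarrow> nat) \<Rightarrow> nat \<Rightarrow> 'a" where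
  "noise_avg js t = (1 - \<gamma>) *\<^sub>R (\<Sum>k=1..t. \<gamma> ^ (t - k) *\<^sub>R noise js k)"

definition mom_err :: "(nat \<Rightarrow> nat) \<Rightarrow> nat \<Rightarrow> 'a" where
  "mom_err js t = M js t - gradF (W js t) - noise_avg js t"

lemma W_eq_sgdm_iter: "W js t = sgdm_iter gf zs \<gamma> \<tau>1 \<tau>2 (\<lambda>_. \<eta>) js t"
  by (simp add: W_def state_def sgdm_iter_def)

lemma M_0: "M js 0 = 0" and W_0: "W js 0 = 0" and W_1: "W js (Suc 0) = 0"
  by (simp_all add: M_def W_def state_def)

lemma M_Suc: "M js (Suc t) = \<gamma> *\<^sub>R M js t + (1 - \<gamma>) *\<^sub>R gclip js (Suc t)"
  by (simp add: M_def W_def gclip_def state_def Let_def split_beta)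

lemma W_Suc: "1 \<le> t \<Longrightarrow> W js (Suc t) = W js t - \<eta> *\<^sub>R clip \<tau>2 (M js t)"
  by (cases t) (simp_all add: M_def W_def gclip_def state_def Let_def split_beta)

lemma norm_W_Suc_diff_le: "norm (W js (Suc t) - W js t) \<le> \<eta> * \<tau>2"
proof (cases "t = 0")
  case True
  thus ?thesis using step_pos thresholds_pos by (simp add: W_0 W_1)
next
  case False
  thus ?thesis using step_pos thresholds_pos norm_clip_le_threshold[of \<tau>2 "M js t"]
    by (simp add: W_Suc mult_left_mono)
qed

lemma state_prefix: "(\<And>i. 1 \<le> i \<Longrightarrow> i \<le> k \<Longrightarrow> f i = h i) \<Longrightarrow> state f k = state h k"
proof (induction k)
  case 0 thus ?case by (simp add: state_def)
next
  case (Suc k)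
  hence "state f k = state h k" by simp
  thus ?case using Suc.prems[of "Suc k"] by (simp add: state_def Let_def split_beta)
qed

lemma W_prefix: "(\<And>i. i < t \<Longrightarrow> f i = h i) \<Longrightarrow> W f t = W h t"
  unfolding W_def by (rule arg_cong[where f = fst], rule state_prefix) auto

lemma noise_prefix: "(\<And>i. i \<le> k \<Longrightarrow> f i = h i) \<Longrightarrow> noise f k = noise h k"
  using W_prefix[of k f h] by (simp add: noise_def gclip_def gclip_mean_def)

lemma noise_avg_Suc: "noise_avg js (Suc t) = \<gamma> *\<^sub>R noise_avg js t + (1 - \<gamma>) *\<^sub>R noise js (Suc t)"
proof -
  have "(\<Sum>k=1..t. \<gamma> ^ (Suc t - k) *\<^sub>R noise js k) = \<gamma> *\<^sub>R (\<Sum>k=1..t. \<gamma> ^ (t - k) *\<^sub>R noise js k)"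
    by (simp add: scaleR_sum_right Suc_diff_le)
  thus ?thesis by (simp add: noise_avg_def scaleR_add_right)
qed

text \<open>The momentum tracks the gradient up to the averaged noise; the error \<open>mom_err\<close> is
  driven only by the gradient drift and the clipping bias.\<close>

lemma mom_err_0: "mom_err js 0 = - gradF 0"
  by (simp add: mom_err_def M_0 W_0 noise_avg_def)

lemma mom_err_Suc:
  "mom_err js (Suc t) = \<gamma> *\<^sub>R mom_err js t + \<gamma> *\<^sub>R (gradF (W js t) - gradF (W js (Suc t)))
     + (1 - \<gamma>) *\<^sub>R (gclip_mean js (Suc t) - gradF (W js (Suc t)))"
  by (simp add: mom_err_def M_Suc noise_avg_Suc noise_def algebra_simps)

lemma noise_sum_zero: "(\<Sum>y\<in>{1..n}. noise (f(k := y)) k \<bullet> b) = 0"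
proof -
  have Wk: "W (f(k := y)) k = W f k" for y by (rule W_prefix) auto
  define G where "G = gclip_mean f k"
  have "(\<Sum>y\<in>{1..n}. noise (f(k := y)) k \<bullet> b)
          = (\<Sum>y\<in>{1..n}. clip \<tau>1 (gf (W f k) (zs y)) \<bullet> b - G \<bullet> b)"
    by (intro sum.cong refl) (simp add: noise_def gclip_def gclip_mean_def Wk G_def inner_diff_left)
  also have "\<dots> = (\<Sum>y\<in>{1..n}. clip \<tau>1 (gf (W f k) (zs y))) \<bullet> b - real n * (G \<bullet> b)"
    by (simp add: sum_subtractf inner_sum_left)
  also have "real n * (G \<bullet> b) = (\<Sum>y\<in>{1..n}. clip \<tau>1 (gf (W f k) (zs y))) \<bullet> b"
    using n_pos by (simp add: G_def gclip_mean_def)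
  finally show ?thesis by (simp only: diff_self)
qed

lemma norm_noise_le:
  assumes bound: "\<And>js t j. js \<in> set_pmf (index_law n T) \<Longrightarrow> t \<in> {1..T} \<Longrightarrow> j \<in> {1..n} \<Longrightarrow>
                    norm (gf (W js t) (zs j)) \<le> B"
    and k: "1 \<le> k" "k \<le> T" and f: "f \<in> set_pmf (index_law n k)"
  shows "norm (noise f k) \<le> 2 * B"
proof -
  obtain f' where f': "f' \<in> set_pmf (index_law n T)" "\<forall>i\<le>k. f' i = f i"
    using index_law_prefix_extend[OF n_pos f k(2)] by blast
  have "W f k = W f' k" by (rule W_prefix) (use f' in auto)
  hence clip_le: "norm (clip \<tau>1 (gf (W f k) (zs j))) \<le> B" if "j \<in> {1..n}" for j
    using bound[OF f'(1) _ that, of k] k norm_clip_le[of \<tau>1] thresholds_pos order.trans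
    by fastforce
  have "norm (gclip_mean f k) \<le> (1 / real n) * (\<Sum>j=1..n. norm (clip \<tau>1 (gf (W f k) (zs j))))"
    unfolding gclip_mean_def by (simp add: divide_right_mono norm_sum)
  also have "\<dots> \<le> (1 / real n) * (\<Sum>j=1..n. B)"
    by (intro mult_left_mono sum_mono clip_le) auto
  also have "\<dots> = B" using n_pos by simp
  finally have "norm (gclip_mean f k) \<le> B" .
  moreover have "f k \<in> {1..n}" using f k unfolding set_pmf_index_law[OF n_pos] by auto
  hence "norm (gclip f k) \<le> B" unfolding gclip_def by (rule clip_le)
  ultimately show ?thesis unfolding noise_def using norm_triangle_ineq4[of "gclip f k" "gclip_mean f k"] by linarith
qed

section \<open>Concentration of the averaged noise\<close>

definition noise_weight :: "nat \<Rightarrow> nat \<Rightarrow> real" where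
  "noise_weight t k = (if k \<le> t then (1 - \<gamma>) * \<gamma> ^ (t - k) else 0)"

lemma noise_avg_inner_eq:
  assumes "t \<le> T"
  shows "noise_avg js t \<bullet> b = (\<Sum>k=1..T. noise_weight t k * (noise js k \<bullet> b))"
proof -
  have "{k \<in> {1..T}. k \<le> t} = {1..t}" using assms by auto
  moreover have "(\<Sum>k=1..T. noise_weight t k * (noise js k \<bullet> b))
           = (\<Sum>k\<in>{k \<in> {1..T}. k \<le> t}. (1 - \<gamma>) * \<gamma> ^ (t - k) * (noise js k \<bullet> b))"
    by (simp only: sum.inter_filter[OF finite_atLeastAtMost])
       (intro sum.cong refl, simp add: noise_weight_def)
  ultimately have "(\<Sum>k=1..T. noise_weight t k * (noise js k \<bullet> b))
           = (\<Sum>k=1..t. (1 - \<gamma>) * \<gamma> ^ (t - k) * (noise js k \<bullet> b))"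
    by simp
  also have "\<dots> = noise_avg js t \<bullet> b"
    by (simp add: noise_avg_def inner_sum_left sum_distrib_left mult.assoc)
  finally show ?thesis by simp
qed

lemma sum_noise_weight_sq_le: "(\<Sum>k=1..T. (noise_weight t k)\<^sup>2) \<le> 1 - \<gamma>"
proof -
  have "(\<Sum>k=1..T. (noise_weight t k)\<^sup>2) \<le> (\<Sum>k=1..t. (1 - \<gamma>)\<^sup>2 * (\<gamma>\<^sup>2) ^ (t - k))"
  proof -
    have "(\<Sum>k=1..T. (noise_weight t k)\<^sup>2) = (\<Sum>k\<in>{k \<in> {1..T}. k \<le> t}. (1 - \<gamma>)\<^sup>2 * (\<gamma>\<^sup>2) ^ (t - k))"
      by (simp only: sum.inter_filter[OF finite_atLeastAtMost])
         (intro sum.cong refl, simp add: noise_weight_def power_mult_distrib power_mult[symmetric] mult.commute)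
    also have "\<dots> \<le> (\<Sum>k=1..t. (1 - \<gamma>)\<^sup>2 * (\<gamma>\<^sup>2) ^ (t - k))"
      by (rule sum_mono2) auto
    finally show ?thesis .
  qed
  also have "\<dots> \<le> (1 - \<gamma>)\<^sup>2 * (1 / (1 - \<gamma>\<^sup>2))"
    unfolding sum_distrib_left[symmetric] using momentum
    by (intro mult_left_mono sum_power_diff_le) (auto simp: power_less_one_iff abs_square_less_1)
  also have "\<dots> = (1 - \<gamma>) / (1 + \<gamma>)"
  proof -
    have "1 - \<gamma>\<^sup>2 = (1 - \<gamma>) * (1 + \<gamma>)" by (simp add: power2_eq_square algebra_simps)
    thus ?thesis using momentum by (simp add: power2_eq_square)
  qed
  also have "\<dots> \<le> 1 - \<gamma>"
    using divide_left_mono[of 1 "1 + \<gamma>" "1 - \<gamma>"] momentum by simp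
  finally show ?thesis .
qed

context
  fixes T :: nat and B :: real
  assumes grad_bound: "\<And>js t j. js \<in> set_pmf (index_law n T) \<Longrightarrow> t \<in> {1..T} \<Longrightarrow> j \<in> {1..n} \<Longrightarrow>
                         norm (gf (W js t) (zs j)) \<le> B"
    and B_pos: "B > 0"
begin

lemma noise_coord_tail:
  fixes b :: 'a and \<sigma> :: real
  assumes b: "b \<in> Basis" and \<sigma>: "\<bar>\<sigma>\<bar> = 1" and x: "x > 0"
  shows "measure_pmf.prob (index_law n T)
           {js. (\<Sum>k=1..T. noise_weight t k * (\<sigma> * (noise js k \<bullet> b))) \<ge> x}
         \<le> exp (- x\<^sup>2 / (2 * (4 * B\<^sup>2 * (1 - \<gamma>))))"
proof (rule index_law_azuma[OF n_pos, where c = "2 * B"])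
  fix k :: nat and f h :: "nat \<Rightarrow> nat" assume "\<And>i. i \<le> k \<Longrightarrow> f i = h i"
  thus "\<sigma> * (noise f k \<bullet> b) = \<sigma> * (noise h k \<bullet> b)" using noise_prefix by metis
next
  fix k :: nat and f :: "nat \<Rightarrow> nat"
  show "(\<Sum>y\<in>{1..n}. \<sigma> * (noise (f(k := y)) k \<bullet> b)) = 0"
    using noise_sum_zero[of f k b] by (simp add: sum_distrib_left[symmetric] del: fun_upd_apply)
next
  fix k :: nat and f :: "nat \<Rightarrow> nat" assume "1 \<le> k" "k \<le> T" "f \<in> set_pmf (index_law n k)"
  hence "norm (noise f k) \<le> 2 * B" by (intro norm_noise_le[OF grad_bound]) auto
  moreover have "\<bar>noise f k \<bullet> b\<bar> \<le> norm (noise f k)" using b by (rule Basis_le_norm)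
  ultimately show "\<bar>\<sigma> * (noise f k \<bullet> b)\<bar> \<le> 2 * B" using \<sigma> by (simp add: abs_mult)
next
  have "(\<Sum>k=1..T. (noise_weight t k)\<^sup>2) * (2 * B)\<^sup>2 \<le> (1 - \<gamma>) * (2 * B)\<^sup>2"
    by (intro mult_right_mono sum_noise_weight_sq_le) auto
  thus "(\<Sum>k=1..T. (noise_weight t k)\<^sup>2) * (2 * B)\<^sup>2 \<le> 4 * B\<^sup>2 * (1 - \<gamma>)"
    by (simp add: power2_eq_square algebra_simps)
qed (use momentum B_pos x in \<open>auto simp: noise_weight_def\<close>)

text \<open>Union bound over the iterations, the coordinates and both signs.\<close>

lemma noise_avg_tail:
  assumes x: "x > 0"
  shows "measure_pmf.prob (index_law n T) {js. \<exists>t\<in>{1..T}. \<exists>b\<in>(Basis::'a set). \<bar>noise_avg js t \<bullet> b\<bar> \<ge> x}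
        \<le> real T * (2 * real DIM('a)) * exp (- x\<^sup>2 / (2 * (4 * B\<^sup>2 * (1 - \<gamma>))))"
proof -
  define A where "A = (\<lambda>(t, b, \<sigma>). {js. (\<Sum>k=1..T. noise_weight t k * (\<sigma> * (noise js k \<bullet> b))) \<ge> x})"
  define I where "I = {1..T} \<times> (Basis::'a set) \<times> {1::real, -1}"
  have "{js. \<exists>t\<in>{1..T}. \<exists>b\<in>(Basis::'a set). \<bar>noise_avg js t \<bullet> b\<bar> \<ge> x} \<subseteq> (\<Union>p\<in>I. A p)"
  proof safe
    fix js t and b :: 'a assume tb: "t \<in> {1..T}" "b \<in> Basis" "\<bar>noise_avg js t \<bullet> b\<bar> \<ge> x"
    have eq: "(\<Sum>k=1..T. noise_weight t k * (\<sigma> * (noise js k \<bullet> b))) = \<sigma> * (noise_avg js t \<bullet> b)" for \<sigma>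
      using noise_avg_inner_eq[of t T js b] tb(1) by (simp add: sum_distrib_left algebra_simps)
    have "js \<in> A (t, b, 1) \<or> js \<in> A (t, b, -1)"
      using tb(3) eq[of 1] eq[of "-1"] by (auto simp: A_def abs_le_iff)
    thus "js \<in> (\<Union>p\<in>I. A p)" using tb by (auto simp: I_def)
  qed
  hence "measure_pmf.prob (index_law n T) {js. \<exists>t\<in>{1..T}. \<exists>b\<in>(Basis::'a set). \<bar>noise_avg js t \<bullet> b\<bar> \<ge> x}
      \<le> measure_pmf.prob (index_law n T) (\<Union>p\<in>I. A p)"
    by (rule measure_pmf.finite_measure_mono) simp
  also have "\<dots> \<le> (\<Sum>p\<in>I. measure_pmf.prob (index_law n T) (A p))"
    by (rule measure_pmf.finite_measure_subadditive_finite) (auto simp: I_def)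
  also have "\<dots> \<le> (\<Sum>p\<in>I. exp (- x\<^sup>2 / (2 * (4 * B\<^sup>2 * (1 - \<gamma>)))))"
  proof (rule sum_mono)
    fix p assume "p \<in> I"
    then obtain t b \<sigma> where "p = (t, b, \<sigma>)" "b \<in> Basis" "\<bar>\<sigma>\<bar> = 1" by (auto simp: I_def)
    thus "measure_pmf.prob (index_law n T) (A p) \<le> exp (- x\<^sup>2 / (2 * (4 * B\<^sup>2 * (1 - \<gamma>))))"
      unfolding A_def using noise_coord_tail[OF _ _ x] by simp
  qed
  also have "\<dots> = real T * (2 * real DIM('a)) * exp (- x\<^sup>2 / (2 * (4 * B\<^sup>2 * (1 - \<gamma>))))"
    by (simp add: I_def card_cartesian_product)
  finally show ?thesis .
qed

end

end

section \<open>Descent analysis\<close>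

locale clipped_sgdm_smooth = clipped_sgdm gf zs n \<gamma> \<tau>1 \<tau>2 \<eta>
  for gf :: "'a::euclidean_space \<Rightarrow> 'z \<Rightarrow> 'a" and zs n \<gamma> \<tau>1 \<tau>2 \<eta> +
  fixes F :: "'a \<Rightarrow> real" and L :: real
  assumes F_deriv: "\<And>w. (F has_derivative (\<lambda>h. gradF w \<bullet> h)) (at w)"
    and gradF_lipschitz: "\<And>u v. norm (gradF u - gradF v) \<le> L * norm (u - v)"
    and L_nonneg: "0 \<le> L" and F_nonneg: "\<And>w. 0 \<le> F w"
begin

lemma norm_mom_err_le:
  assumes bias: "\<And>t. 1 \<le> t \<Longrightarrow> t \<le> T \<Longrightarrow> norm (gclip_mean js t - gradF (W js t)) \<le> b"
    and b: "0 \<le> b" and t: "t \<le> T"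
  shows "norm (mom_err js t) \<le> \<gamma> ^ t * norm (gradF 0) + L * \<eta> * \<tau>2 / (1 - \<gamma>) + b"
proof -
  let ?c = "L * \<eta> * \<tau>2"
  have c: "?c \<ge> 0" using L_nonneg step_pos thresholds_pos by simp
  have drift: "norm (gradF (W js t) - gradF (W js (Suc t))) \<le> ?c" for t
  proof -
    have "norm (gradF (W js t) - gradF (W js (Suc t))) \<le> L * norm (W js (Suc t) - W js t)"
      using gradF_lipschitz by (metis norm_minus_commute)
    also have "\<dots> \<le> ?c"
      using mult_left_mono[OF norm_W_Suc_diff_le L_nonneg] by (simp add: mult.assoc)
    finally show ?thesis .
  qed
  have step: "norm (mom_err js (Suc t)) \<le> \<gamma> * norm (mom_err js t) + (\<gamma> * ?c + (1 - \<gamma>) * b)"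
    if "t < T" for t
  proof -
    have "norm (mom_err js (Suc t)) \<le> \<gamma> * norm (mom_err js t)
        + \<gamma> * norm (gradF (W js t) - gradF (W js (Suc t)))
        + (1 - \<gamma>) * norm (gclip_mean js (Suc t) - gradF (W js (Suc t)))"
      unfolding mom_err_Suc using momentum
      by (intro order_trans[OF norm_triangle_le[OF add_right_mono[OF norm_triangle_ineq]]]) simp
    also have "\<dots> \<le> \<gamma> * norm (mom_err js t) + \<gamma> * ?c + (1 - \<gamma>) * b"
      using momentum bias[of "Suc t"] that drift[of t]
      by (intro add_mono mult_left_mono order_refl) auto
    finally show ?thesis by simp
  qed
  have "norm (mom_err js t) \<le> \<gamma> ^ t * norm (mom_err js 0) + (\<gamma> * ?c + (1 - \<gamma>) * b) / (1 - \<gamma>)"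
    by (rule geometric_recursion_bound[where e = "\<lambda>t. norm (mom_err js t)" and T = T,
          OF momentum _ step t]) (use momentum c b in simp)
  also have "(\<gamma> * ?c + (1 - \<gamma>) * b) / (1 - \<gamma>) \<le> ?c / (1 - \<gamma>) + b"
    using momentum c by (simp add: add_divide_distrib divide_right_mono mult_left_le_one_le)
  finally show ?thesis by (simp add: mom_err_0)
qed

lemma descent_step:
  assumes "1 \<le> t"
  shows "F (W js (Suc t)) \<le> F (W js t) - \<eta> * \<tau>2 * norm (gradF (W js t))
     + 2 * \<eta> * \<tau>2 * norm (M js t - gradF (W js t)) + \<eta> * \<tau>2\<^sup>2 / 4 + L * \<eta>\<^sup>2 * \<tau>2\<^sup>2 / 2"
proof -
  let ?x = "W js t" and ?d = "clip \<tau>2 (M js t)"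
  have d: "W js (Suc t) - ?x = - (\<eta> *\<^sub>R ?d)" using assms by (simp add: W_Suc)
  have "F (W js (Suc t)) \<le> F ?x + gradF ?x \<bullet> (W js (Suc t) - ?x) + L / 2 * (norm (W js (Suc t) - ?x))\<^sup>2"
    by (rule descent_lemma[OF F_deriv gradF_lipschitz])
  also have "gradF ?x \<bullet> (W js (Suc t) - ?x) = - \<eta> * (gradF ?x \<bullet> ?d)" unfolding d by simp
  also have "- \<eta> * (gradF ?x \<bullet> ?d)
      \<le> - \<eta> * (\<tau>2 * norm (gradF ?x) - 2 * \<tau>2 * norm (M js t - gradF ?x) - \<tau>2\<^sup>2 / 4)"
    using inner_clip_ge[of \<tau>2 "gradF ?x" "M js t"] thresholds_pos step_pos
    by (intro mult_left_mono_neg) auto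
  also have "L / 2 * (norm (W js (Suc t) - ?x))\<^sup>2 \<le> L / 2 * (\<eta> * \<tau>2)\<^sup>2"
    using norm_W_Suc_diff_le[of js t] L_nonneg by (intro mult_left_mono power_mono) auto
  finally show ?thesis by (simp add: algebra_simps power_mult_distrib)
qed

lemma descent_sum:
  "\<eta> * \<tau>2 * (\<Sum>t=1..T. norm (gradF (W js t))) \<le> F (W js 1) - F (W js (Suc T))
     + 2 * \<eta> * \<tau>2 * (\<Sum>t=1..T. norm (M js t - gradF (W js t)))
     + real T * (\<eta> * \<tau>2\<^sup>2 / 4 + L * \<eta>\<^sup>2 * \<tau>2\<^sup>2 / 2)"
proof (induction T)
  case (Suc T)
  have "F (W js (Suc (Suc T))) \<le> F (W js (Suc T)) - \<eta> * \<tau>2 * norm (gradF (W js (Suc T)))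
     + 2 * \<eta> * \<tau>2 * norm (M js (Suc T) - gradF (W js (Suc T))) + \<eta> * \<tau>2\<^sup>2 / 4 + L * \<eta>\<^sup>2 * \<tau>2\<^sup>2 / 2"
    by (rule descent_step) simp
  moreover have s1: "(\<Sum>t=1..Suc T. norm (gradF (W js t)))
      = (\<Sum>t=1..T. norm (gradF (W js t))) + norm (gradF (W js (Suc T)))"
    and s2: "(\<Sum>t=1..Suc T. norm (M js t - gradF (W js t)))
      = (\<Sum>t=1..T. norm (M js t - gradF (W js t))) + norm (M js (Suc T) - gradF (W js (Suc T)))"
    by simp_all
  ultimately show ?case using Suc.IH unfolding s1 s2 of_nat_Suc ring_distribs by linarith
qed simp

lemma sum_norm_M_diff_gradF_le:
  assumes bias: "\<And>t. 1 \<le> t \<Longrightarrow> t \<le> T \<Longrightarrow> norm (gclip_mean js t - gradF (W js t)) \<le> b"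
    and b: "0 \<le> b"
    and noise: "\<And>t. 1 \<le> t \<Longrightarrow> t \<le> T \<Longrightarrow> norm (noise_avg js t) \<le> z"
  shows "(\<Sum>t=1..T. norm (M js t - gradF (W js t)))
           \<le> norm (gradF 0) / (1 - \<gamma>) + real T * (L * \<eta> * \<tau>2 / (1 - \<gamma>) + b + z)"
proof -
  let ?c = "L * \<eta> * \<tau>2 / (1 - \<gamma>)" and ?D = "norm (gradF 0)"
  have "norm (M js t - gradF (W js t)) \<le> \<gamma> ^ t * ?D + (?c + b + z)" if t: "t \<in> {1..T}" for t
  proof -
    have "norm (M js t - gradF (W js t)) \<le> norm (mom_err js t) + norm (noise_avg js t)"
      using norm_triangle_ineq[of "mom_err js t" "noise_avg js t"] by (simp add: mom_err_def)
    thus ?thesis using norm_mom_err_le[where T = T and t = t, OF bias b] noise[of t] t by simp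
  qed
  hence "(\<Sum>t=1..T. norm (M js t - gradF (W js t))) \<le> (\<Sum>t=1..T. \<gamma> ^ t * ?D + (?c + b + z))"
    by (rule sum_mono)
  also have "\<dots> = ?D * (\<Sum>t=1..T. \<gamma> ^ t) + real T * (?c + b + z)"
    by (simp add: sum.distrib sum_distrib_left mult.commute)
  also have "\<dots> \<le> ?D / (1 - \<gamma>) + real T * (?c + b + z)"
    using mult_left_mono[OF sum_power_le[OF momentum] norm_ge_zero] by simp
  finally show ?thesis .
qed

lemma avg_norm_gradF_le:
  assumes T: "T \<ge> 1"
    and bias: "\<And>t. 1 \<le> t \<Longrightarrow> t \<le> T \<Longrightarrow> norm (gclip_mean js t - gradF (W js t)) \<le> b"
    and b: "0 \<le> b"
    and noise: "\<And>t. 1 \<le> t \<Longrightarrow> t \<le> T \<Longrightarrow> norm (noise_avg js t) \<le> z"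
  shows "(1 / real T) * (\<Sum>t=1..T. norm (gradF (W js t)))
     \<le> F 0 / (real T * \<eta> * \<tau>2) + 2 * norm (gradF 0) / (real T * (1 - \<gamma>))
       + 2 * (L * \<eta> * \<tau>2 / (1 - \<gamma>)) + 2 * b + 2 * z + \<tau>2 / 4 + L * \<eta> * \<tau>2 / 2"
proof -
  let ?c = "L * \<eta> * \<tau>2 / (1 - \<gamma>)" and ?D = "norm (gradF 0)"
  have nz: "real T \<noteq> 0" "\<eta> \<noteq> 0" "\<tau>2 \<noteq> 0" "1 - \<gamma> \<noteq> 0"
    using T step_pos thresholds_pos momentum by auto
  have "2 * \<eta> * \<tau>2 * (\<Sum>t=1..T. norm (M js t - gradF (W js t)))
      \<le> 2 * \<eta> * \<tau>2 * (?D / (1 - \<gamma>) + real T * (?c + b + z))"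
    using step_pos thresholds_pos sum_norm_M_diff_gradF_le[OF bias b noise] by (intro mult_left_mono) auto
  moreover have "F (W js 1) = F 0" by (simp add: W_1)
  ultimately have "\<eta> * \<tau>2 * (\<Sum>t=1..T. norm (gradF (W js t)))
      \<le> F 0 + 2 * \<eta> * \<tau>2 * (?D / (1 - \<gamma>) + real T * (?c + b + z))
        + real T * (\<eta> * \<tau>2\<^sup>2 / 4 + L * \<eta>\<^sup>2 * \<tau>2\<^sup>2 / 2)"
    using descent_sum[of js T] F_nonneg[of "W js (Suc T)"] by linarith
  moreover have "0 < real T * \<eta> * \<tau>2" using T step_pos thresholds_pos by simp
  ultimately have "(\<eta> * \<tau>2 * (\<Sum>t=1..T. norm (gradF (W js t)))) / (real T * \<eta> * \<tau>2)
      \<le> (F 0 + 2 * \<eta> * \<tau>2 * (?D / (1 - \<gamma>) + real T * (?c + b + z))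
        + real T * (\<eta> * \<tau>2\<^sup>2 / 4 + L * \<eta>\<^sup>2 * \<tau>2\<^sup>2 / 2)) / (real T * \<eta> * \<tau>2)"
    by (rule divide_right_mono[OF _ less_imp_le])
  moreover have "(\<eta> * \<tau>2 * (\<Sum>t=1..T. norm (gradF (W js t)))) / (real T * \<eta> * \<tau>2)
      = (1 / real T) * (\<Sum>t=1..T. norm (gradF (W js t)))"
    using nz by (simp add: field_simps)
  moreover have "(real T * (\<eta> * \<tau>2\<^sup>2 / 4 + L * \<eta>\<^sup>2 * \<tau>2\<^sup>2 / 2)) / (real T * \<eta> * \<tau>2)
      = \<tau>2 / 4 + L * \<eta> * \<tau>2 / 2"
    using nz by (simp add: field_simps power2_eq_square)
  moreover have "(2 * \<eta> * \<tau>2 * (?D / (1 - \<gamma>) + real T * X)) / (real T * \<eta> * \<tau>2)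
      = 2 * ?D / (real T * (1 - \<gamma>)) + 2 * X" for X
    using nz by (simp add: field_simps)
  ultimately show ?thesis unfolding add_divide_distrib by (smt (verit))
qed

end

lemma le_max_one_of_powr_le:
  fixes x :: real
  assumes "0 \<le> x" "1 \<le> \<alpha>" "x powr \<alpha> \<le> K"
  shows "x \<le> max 1 K"
proof (cases "x \<le> 1")
  case False
  hence "x = x powr 1" by simp
  also have "\<dots> \<le> x powr \<alpha>" using False assms by (intro powr_mono) auto
  finally show ?thesis using assms by simp
qed simp

context clipped_sgdm_smooth
begin

context
  fixes T :: nat and \<alpha> G :: real
  assumes \<alpha>: "1 < \<alpha>"
    and moment: "\<And>js t. js \<in> set_pmf (index_law n T) \<Longrightarrow> t \<in> {1..T} \<Longrightarrow>
                   (\<Sum>j=1..n. norm (gf (W js t) (zs j)) powr \<alpha>) / real n \<le> G powr \<alpha>"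
begin

text \<open>A uniform bound on the per-sample gradients; it depends on \<open>n\<close> but not on \<open>T\<close>.\<close>

lemma norm_gf_le_moment:
  assumes "js \<in> set_pmf (index_law n T)" "t \<in> {1..T}" "j \<in> {1..n}"
  shows "norm (gf (W js t) (zs j)) \<le> max 1 (real n * G powr \<alpha>)"
proof (rule le_max_one_of_powr_le)
  have "norm (gf (W js t) (zs j)) powr \<alpha> \<le> (\<Sum>j=1..n. norm (gf (W js t) (zs j)) powr \<alpha>)"
    using assms(3) by (intro member_le_sum) auto
  also have "\<dots> \<le> real n * G powr \<alpha>"
    using moment[OF assms(1,2)] n_pos by (simp add: divide_le_eq mult.commute)
  finally show "norm (gf (W js t) (zs j)) powr \<alpha> \<le> real n * G powr \<alpha>" .
qed (use \<alpha> in auto)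

lemma norm_clip_bias_le:
  assumes "js \<in> set_pmf (index_law n T)" "1 \<le> t" "t \<le> T"
  shows "norm (gclip_mean js t - gradF (W js t)) \<le> G powr \<alpha> / \<tau>1 powr (\<alpha> - 1)"
proof -
  have "gclip_mean js t - gradF (W js t)
          = (1 / real n) *\<^sub>R (\<Sum>j=1..n. clip \<tau>1 (gf (W js t) (zs j)) - gf (W js t) (zs j))"
    by (simp add: gclip_mean_def gradF_def sum_subtractf scaleR_diff_right)
  also have "norm \<dots> \<le> ((\<Sum>j=1..n. norm (gf (W js t) (zs j)) powr \<alpha>) / real n) / \<tau>1 powr (\<alpha> - 1)"
    by (rule norm_mean_clip_diff_le[OF thresholds_pos(1) \<alpha>])
  also have "\<dots> \<le> G powr \<alpha> / \<tau>1 powr (\<alpha> - 1)"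
    using moment[OF assms(1)] assms(2,3) by (intro divide_right_mono) auto
  finally show ?thesis .
qed

lemma prob_noise_avg_large_le:
  assumes T: "T \<ge> 1" and \<delta>: "0 < \<delta>" "\<delta> < 1"
  defines "B \<equiv> max 1 (real n * G powr \<alpha>)" and "d \<equiv> real DIM('a)"
  shows "measure_pmf.prob (index_law n T)
           {js. \<exists>t\<in>{1..T}. \<exists>b\<in>(Basis::'a set).
              \<bar>noise_avg js t \<bullet> b\<bar> \<ge> sqrt (2 * (4 * B\<^sup>2 * (1 - \<gamma>)) * ln (2 * d * real T / \<delta>))}
         \<le> \<delta>"
proof -
  define V where "V = 4 * B\<^sup>2 * (1 - \<gamma>)"
  define x where "x = sqrt (2 * V * ln (2 * d * real T / \<delta>))"
  have d: "d \<ge> 1" unfolding d_def using DIM_positive[where 'a = 'a] by linarith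
  have V: "V > 0" unfolding V_def B_def using momentum by simp
  have "\<delta> < 2 * d * real T" using d T \<delta> mult_mono[of 1 "2 * d" 1 "real T"] by simp
  hence lq: "ln (2 * d * real T / \<delta>) > 0" using \<delta> by simp
  hence x: "x > 0" unfolding x_def using V by simp
  have "measure_pmf.prob (index_law n T) {js. \<exists>t\<in>{1..T}. \<exists>b\<in>(Basis::'a set). \<bar>noise_avg js t \<bullet> b\<bar> \<ge> x}
      \<le> real T * (2 * d) * exp (- x\<^sup>2 / (2 * V))"
    unfolding d_def V_def using x
    by (intro noise_avg_tail[where B = B]) (use norm_gf_le_moment in \<open>auto simp: B_def\<close>)
  also have "\<dots> = \<delta>"
    unfolding x_def using V lq d T \<delta> by (simp add: exp_minus field_simps)
  finally show ?thesis unfolding x_def V_def .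
qed

lemma prob_avg_norm_gradF_le:
  assumes T: "T \<ge> 1" and \<delta>: "0 < \<delta>" "\<delta> < 1"
  defines "B \<equiv> max 1 (real n * G powr \<alpha>)" and "d \<equiv> real DIM('a)"
  shows "measure_pmf.prob (index_law n T)
           {js. (1 / real T) * (\<Sum>t=1..T. norm (gradF (W js t)))
                \<le> F 0 / (real T * \<eta> * \<tau>2) + 2 * norm (gradF 0) / (real T * (1 - \<gamma>))
                  + 2 * (L * \<eta> * \<tau>2 / (1 - \<gamma>)) + 2 * (G powr \<alpha> / \<tau>1 powr (\<alpha> - 1))
                  + 2 * (d * sqrt (2 * (4 * B\<^sup>2 * (1 - \<gamma>)) * ln (2 * d * real T / \<delta>)))
                  + \<tau>2 / 4 + L * \<eta> * \<tau>2 / 2}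
         \<ge> 1 - \<delta>"
    (is "measure_pmf.prob _ {js. ?lhs js \<le> ?rhs} \<ge> _")
proof -
  let ?P = "index_law n T"
  define x where "x = sqrt (2 * (4 * B\<^sup>2 * (1 - \<gamma>)) * ln (2 * d * real T / \<delta>))"
  define bad where "bad = {js. \<exists>t\<in>{1..T}. \<exists>b\<in>(Basis::'a set). \<bar>noise_avg js t \<bullet> b\<bar> \<ge> x}"
  have bad_prob: "measure_pmf.prob ?P bad \<le> \<delta>"
    unfolding bad_def x_def B_def d_def by (rule prob_noise_avg_large_le[OF T \<delta>])
  have "?lhs js \<le> ?rhs" if js: "js \<in> set_pmf ?P" and good: "js \<notin> bad" for js
  proof -
    have "norm (noise_avg js t) \<le> d * x" if t: "1 \<le> t" "t \<le> T" for t
    proof -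
      have "norm (noise_avg js t) \<le> (\<Sum>b\<in>(Basis::'a set). \<bar>noise_avg js t \<bullet> b\<bar>)" by (rule norm_le_l1)
      also have "\<dots> \<le> (\<Sum>b\<in>(Basis::'a set). x)"
        using good t unfolding bad_def by (intro sum_mono) force
      finally show ?thesis by (simp add: d_def)
    qed
    from avg_norm_gradF_le[OF T norm_clip_bias_le[OF js] _ this]
    show ?thesis unfolding x_def by simp
  qed
  hence "set_pmf ?P - bad \<subseteq> {js. ?lhs js \<le> ?rhs}" by blast
  hence "measure_pmf.prob ?P (set_pmf ?P - bad) \<le> measure_pmf.prob ?P {js. ?lhs js \<le> ?rhs}"
    by (intro measure_pmf.finite_measure_mono) auto
  moreover have "measure_pmf.prob ?P (set_pmf ?P - bad) = 1 - measure_pmf.prob ?P bad"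
    using measure_Int_set_pmf[of ?P "UNIV - bad"] measure_pmf.prob_compl[of bad ?P]
    by (simp add: Diff_eq Int_commute)
  ultimately show ?thesis using bad_prob by linarith
qed

end

end

section \<open>The step-size schedule\<close>

text \<open>With \<open>P = T\<^sup>\<beta>\<close> and \<open>Q = T\<^sup>a\<close>, where \<open>\<beta> = (\<alpha>-1)/(3\<alpha>-2)\<close> and
  \<open>a = \<alpha>/(3\<alpha>-2)\<close>, the schedule reads \<open>1 - \<gamma> = s/Q\<close>, \<open>\<eta> = q/Q\<close>, \<open>\<tau>\<^sub>2 = r/P\<close>
  and \<open>T = Q P\<^sup>2\<close>. The exponents are chosen so that every error term is \<open>O(1/P)\<close>;
  \<open>P\<^sup>2 \<le> Q\<close> is where \<open>\<alpha> \<le> 2\<close> is needed.\<close>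

lemma schedule_powers:
  fixes x \<alpha> :: real
  assumes \<alpha>: "1 < \<alpha>" "\<alpha> \<le> 2" and x: "1 \<le> x"
  defines "P \<equiv> x powr ((\<alpha> - 1) / (3 * \<alpha> - 2))" and "Q \<equiv> x powr (\<alpha> / (3 * \<alpha> - 2))"
  shows "x = Q * P * P" and "P * P \<le> Q" and "1 \<le> P" and "Q powr ((\<alpha> - 1) / \<alpha>) = P"
    and "x powr (- \<alpha> / (3 * \<alpha> - 2)) = 1 / Q" and "x powr (- (\<alpha> - 1) / (3 * \<alpha> - 2)) = 1 / P"
proof -
  define a where "a = \<alpha> / (3 * \<alpha> - 2)"
  define \<beta> where "\<beta> = (\<alpha> - 1) / (3 * \<alpha> - 2)"
  have den: "3 * \<alpha> - 2 > 0" using \<alpha> by simp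
  have "a + \<beta> + \<beta> = (\<alpha> + (\<alpha> - 1) + (\<alpha> - 1)) / (3 * \<alpha> - 2)"
    by (simp only: a_def \<beta>_def add_divide_distrib)
  also have "\<dots> = 1" using den by simp
  finally have "x = x powr (a + \<beta> + \<beta>)" using x by simp
  thus "x = Q * P * P" unfolding P_def Q_def by (simp only: a_def[symmetric] \<beta>_def[symmetric] powr_add)
  have "\<beta> + \<beta> \<le> a"
    unfolding a_def \<beta>_def add_divide_distrib[symmetric] using \<alpha> den by (intro divide_right_mono) auto
  hence "x powr (\<beta> + \<beta>) \<le> x powr a" using x by (intro powr_mono) auto
  thus "P * P \<le> Q" unfolding P_def Q_def by (simp only: a_def[symmetric] \<beta>_def[symmetric] powr_add)
  show "1 \<le> P" unfolding P_def using x \<alpha> den by (intro ge_one_powr_ge_zero) auto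
  have "a * ((\<alpha> - 1) / \<alpha>) = \<beta>" using \<alpha> den by (simp add: a_def \<beta>_def)
  thus "Q powr ((\<alpha> - 1) / \<alpha>) = P" unfolding Q_def P_def a_def \<beta>_def by (simp add: powr_powr)
  show "x powr (- \<alpha> / (3 * \<alpha> - 2)) = 1 / Q"
    unfolding Q_def by (simp add: powr_minus divide_inverse)
  have "- (\<alpha> - 1) / (3 * \<alpha> - 2) = - \<beta>" unfolding \<beta>_def by (simp add: minus_divide_left)
  thus "x powr (- (\<alpha> - 1) / (3 * \<alpha> - 2)) = 1 / P"
    unfolding P_def \<beta>_def[symmetric] by (simp add: powr_minus divide_inverse)
qed

lemma clip_bias_schedule_eq:
  fixes G p y \<alpha> :: real
  assumes "G > 0" "p > 0" "y > 0"
  shows "G powr \<alpha> / (p * G / y powr (1 / \<alpha>)) powr (\<alpha> - 1) = G * p powr (1 - \<alpha>) * y powr ((\<alpha> - 1) / \<alpha>)"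
proof -
  have "(p * G / y powr (1 / \<alpha>)) powr (\<alpha> - 1) = p powr (\<alpha> - 1) * G powr (\<alpha> - 1) / y powr ((\<alpha> - 1) / \<alpha>)"
    using assms by (simp add: powr_divide powr_mult powr_powr)
  moreover have "G powr \<alpha> = G * G powr (\<alpha> - 1)" using assms by (simp add: powr_diff)
  moreover have "p powr (1 - \<alpha>) = 1 / p powr (\<alpha> - 1)"
    using assms by (simp add: powr_minus_divide[symmetric])
  ultimately show ?thesis using assms by (simp add: field_simps)
qed

lemma sqrt_add_le_mult:
  fixes c l :: real
  assumes c: "c \<ge> 1 / 2" and l: "l \<ge> 1 / 2"
  shows "sqrt (c + l) \<le> (2 * c + 1) * l"
proof -
  have "1 \<le> sqrt (c + l)" using c l by simp
  hence "sqrt (c + l) * 1 \<le> sqrt (c + l) * sqrt (c + l)" by (intro mult_left_mono) auto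
  also have "\<dots> = c + l" using c l by simp
  also have "c \<le> 2 * c * l" using c mult_left_mono[OF l, of "2 * c"] by simp
  finally show ?thesis by (simp add: algebra_simps)
qed

lemma noise_term_schedule_le:
  fixes P Q B d s c l :: real
  assumes P: "1 \<le> P" and PPQ: "P * P \<le> Q" and B: "B \<ge> 1" and d: "d \<ge> 1" and s: "s > 0"
    and c: "c \<ge> 1 / 2" and l: "l \<ge> 1 / 2"
  shows "2 * (d * sqrt (2 * (4 * B\<^sup>2 * (s / Q)) * (c + l))) \<le> 2 * d * B * sqrt (8 * s) * (2 * c + 1) * l / P"
proof -
  have "P \<le> sqrt Q" using PPQ P by (simp add: real_le_rsqrt power2_eq_square)
  hence ineq: "sqrt (c + l) / sqrt Q \<le> (2 * c + 1) * l / P"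
    using sqrt_add_le_mult[OF c l] P c l by (intro frac_le) auto
  have "sqrt (2 * (4 * B\<^sup>2 * (s / Q)) * (c + l)) = B * sqrt (8 * s) * (sqrt (c + l) / sqrt Q)"
    using B s by (simp add: real_sqrt_mult real_sqrt_divide)
  also have "\<dots> \<le> B * sqrt (8 * s) * ((2 * c + 1) * l / P)"
    by (rule mult_left_mono[OF ineq]) (use B s in simp)
  finally have "2 * (d * sqrt (2 * (4 * B\<^sup>2 * (s / Q)) * (c + l)))
      \<le> 2 * (d * (B * sqrt (8 * s) * ((2 * c + 1) * l / P)))"
    using d by (intro mult_left_mono) auto
  also have "\<dots> = 2 * d * B * sqrt (8 * s) * (2 * c + 1) * l / P" by simp
  finally show ?thesis .
qed

lemma schedule_drift_terms_le:
  fixes P Q T \<gamma> \<eta> \<tau>2 s q r L F0 D0 :: real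
  assumes P: "1 \<le> P" and Q: "P \<le> Q" and T: "T = Q * P * P"
    and \<gamma>: "1 - \<gamma> = s / Q" and \<eta>: "\<eta> = q / Q" and \<tau>2: "\<tau>2 = r / P"
    and pos: "s > 0" "q > 0" "r > 0" and nonneg: "L \<ge> 0" "F0 \<ge> 0" "D0 \<ge> 0"
  shows "F0 / (T * \<eta> * \<tau>2) + 2 * D0 / (T * (1 - \<gamma>)) + 2 * (L * \<eta> * \<tau>2 / (1 - \<gamma>))
           + \<tau>2 / 4 + L * \<eta> * \<tau>2 / 2
         \<le> (F0 / (q * r) + 2 * D0 / s + 2 * (L * q * r / s) + r / 4 + L * q * r / 2) / P"
proof -
  have nz: "P \<noteq> 0" "Q \<noteq> 0" using P Q by auto
  have "2 * D0 / (T * (1 - \<gamma>)) = (2 * D0 / s) / (P * P)"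
    unfolding T \<gamma> using nz pos by (simp add: field_simps)
  also have "\<dots> \<le> (2 * D0 / s) / P"
    using P nonneg pos by (intro divide_left_mono) (auto simp: mult_le_cancel_left1)
  finally have "2 * D0 / (T * (1 - \<gamma>)) \<le> (2 * D0 / s) / P" .
  moreover have "L * \<eta> * \<tau>2 / 2 = (L * q * r / 2) / P / Q" unfolding \<eta> \<tau>2 by (simp add: field_simps)
  hence "L * \<eta> * \<tau>2 / 2 \<le> (L * q * r / 2) / P"
    using divide_left_mono[of 1 Q "L * q * r / 2 / P"] P Q nonneg pos by simp
  moreover have "F0 / (T * \<eta> * \<tau>2) = (F0 / (q * r)) / P"
    unfolding T \<eta> \<tau>2 using nz pos by (simp add: field_simps)
  moreover have "2 * (L * \<eta> * \<tau>2 / (1 - \<gamma>)) = 2 * (L * q * r / s) / P"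
    unfolding \<eta> \<tau>2 \<gamma> using nz pos by (simp add: field_simps)
  moreover have "\<tau>2 / 4 = (r / 4) / P" unfolding \<tau>2 by simp
  moreover have "(F0 / (q * r) + 2 * D0 / s + 2 * (L * q * r / s) + r / 4 + L * q * r / 2) / P
      = F0 / (q * r) / P + (2 * D0 / s) / P + 2 * (L * q * r / s) / P + (r / 4) / P + (L * q * r / 2) / P"
    by (simp add: add_divide_distrib)
  ultimately show ?thesis by linarith
qed

lemma schedule_rate:
  fixes T :: nat and \<alpha> \<delta> s q r p G L F0 D0 B d :: real
  assumes \<alpha>: "1 < \<alpha>" "\<alpha> \<le> 2" and T: "T \<ge> 2" and \<delta>: "0 < \<delta>" "\<delta> < 1"
    and pos: "s > 0" "q > 0" "r > 0" "p > 0" "G > 0"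
    and nonneg: "L \<ge> 0" "F0 \<ge> 0" "D0 \<ge> 0" and B: "B \<ge> 1" and d: "d \<ge> 1"
    and \<gamma>: "\<gamma> = 1 - s * real T powr (- \<alpha> / (3 * \<alpha> - 2))"
    and \<tau>1: "\<tau>1 = p * G / (1 - \<gamma>) powr (1 / \<alpha>)"
    and \<eta>: "\<eta> = q * real T powr (- \<alpha> / (3 * \<alpha> - 2))"
    and \<tau>2: "\<tau>2 = r * real T powr (- (\<alpha> - 1) / (3 * \<alpha> - 2))"
  defines "K \<equiv> F0 / (q * r) + 2 * D0 / s + 2 * (L * q * r / s)
                + 2 * (G * p powr (1 - \<alpha>) * s powr ((\<alpha> - 1) / \<alpha>)) + r / 4 + L * q * r / 2"
  shows "F0 / (real T * \<eta> * \<tau>2) + 2 * D0 / (real T * (1 - \<gamma>)) + 2 * (L * \<eta> * \<tau>2 / (1 - \<gamma>))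
       + 2 * (G powr \<alpha> / \<tau>1 powr (\<alpha> - 1))
       + 2 * (d * sqrt (2 * (4 * B\<^sup>2 * (1 - \<gamma>)) * ln (2 * d * real T / \<delta>)))
       + \<tau>2 / 4 + L * \<eta> * \<tau>2 / 2
     \<le> (2 * K + 2 * d * B * sqrt (8 * s) * (2 * ln (2 * d) + 1))
        * ln (real T / \<delta>) / real T powr ((\<alpha> - 1) / (3 * \<alpha> - 2))"
proof -
  define P where "P = real T powr ((\<alpha> - 1) / (3 * \<alpha> - 2))"
  define Q where "Q = real T powr (\<alpha> / (3 * \<alpha> - 2))"
  define lt where "lt = ln (real T / \<delta>)"
  have T1: "1 \<le> real T" using T by simp
  note powers = schedule_powers[OF \<alpha> T1, folded P_def Q_def]
  have P: "1 \<le> P" and PPQ: "P * P \<le> Q" using powers by auto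
  have "P * 1 \<le> P * P" using P by (intro mult_left_mono) auto
  hence Q: "P \<le> Q" using PPQ by linarith
  have \<gamma>': "1 - \<gamma> = s / Q" and \<eta>': "\<eta> = q / Q" and \<tau>2': "\<tau>2 = r / P"
    using powers(5,6) \<gamma> \<eta> \<tau>2 by simp_all
  have lt: "lt \<ge> 1 / 2"
  proof -
    have "ln 2 \<le> lt" unfolding lt_def using T \<delta> by (intro ln_mono) (auto simp: le_divide_eq)
    thus ?thesis using ln2_ge_two_thirds by linarith
  qed
  have ld: "ln (2 * d) \<ge> 1 / 2"
    using ln2_ge_two_thirds ln_mono[of 2 "2 * d"] d by linarith
  have bias: "G powr \<alpha> / \<tau>1 powr (\<alpha> - 1) = (G * p powr (1 - \<alpha>) * s powr ((\<alpha> - 1) / \<alpha>)) / P"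
  proof -
    have "1 - \<gamma> > 0" using \<gamma>' pos P Q by simp
    hence "G powr \<alpha> / \<tau>1 powr (\<alpha> - 1) = G * p powr (1 - \<alpha>) * (1 - \<gamma>) powr ((\<alpha> - 1) / \<alpha>)"
      unfolding \<tau>1 by (rule clip_bias_schedule_eq[OF pos(5,4)])
    also have "(1 - \<gamma>) powr ((\<alpha> - 1) / \<alpha>) = s powr ((\<alpha> - 1) / \<alpha>) / P"
      unfolding \<gamma>' using pos P Q powers(4) by (simp add: powr_divide)
    finally show ?thesis by simp
  qed
  have "ln (2 * d * real T / \<delta>) = ln (2 * d) + lt"
    unfolding lt_def using d T \<delta> by (simp add: ln_mult_pos[symmetric] mult.assoc)
  hence noise: "2 * (d * sqrt (2 * (4 * B\<^sup>2 * (1 - \<gamma>)) * ln (2 * d * real T / \<delta>)))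
      \<le> 2 * d * B * sqrt (8 * s) * (2 * ln (2 * d) + 1) * lt / P"
    unfolding \<gamma>' by (simp only: noise_term_schedule_le[OF P PPQ B d pos(1) ld lt])
  have drift: "F0 / (real T * \<eta> * \<tau>2) + 2 * D0 / (real T * (1 - \<gamma>)) + 2 * (L * \<eta> * \<tau>2 / (1 - \<gamma>))
      + \<tau>2 / 4 + L * \<eta> * \<tau>2 / 2 \<le> (F0 / (q * r) + 2 * D0 / s + 2 * (L * q * r / s) + r / 4 + L * q * r / 2) / P"
    by (rule schedule_drift_terms_le[OF P Q powers(1) \<gamma>' \<eta>' \<tau>2' pos(1-3) nonneg])
  have K_split: "K / P = (F0 / (q * r) + 2 * D0 / s + 2 * (L * q * r / s) + r / 4 + L * q * r / 2) / P
     + 2 * ((G * p powr (1 - \<alpha>) * s powr ((\<alpha> - 1) / \<alpha>)) / P)"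
    unfolding K_def by (simp add: add_divide_distrib)
  have "K \<ge> 0" unfolding K_def using pos nonneg by simp
  hence "K * 1 \<le> K * (2 * lt)" using lt by (intro mult_left_mono) auto
  hence K_le: "K / P \<le> 2 * K * lt / P" using P by (simp add: divide_right_mono)
  have "F0 / (real T * \<eta> * \<tau>2) + 2 * D0 / (real T * (1 - \<gamma>)) + 2 * (L * \<eta> * \<tau>2 / (1 - \<gamma>))
       + 2 * (G powr \<alpha> / \<tau>1 powr (\<alpha> - 1))
       + 2 * (d * sqrt (2 * (4 * B\<^sup>2 * (1 - \<gamma>)) * ln (2 * d * real T / \<delta>)))
       + \<tau>2 / 4 + L * \<eta> * \<tau>2 / 2
     \<le> 2 * K * lt / P + (2 * d * B * sqrt (8 * s) * (2 * ln (2 * d) + 1) * lt) / P"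
    using drift K_split K_le bias noise by linarith
  also have "\<dots> = (2 * K + 2 * d * B * sqrt (8 * s) * (2 * ln (2 * d) + 1)) * lt / P"
    by (simp add: add_divide_distrib distrib_right)
  finally show ?thesis unfolding lt_def P_def .
qed

definition sgdm_rate_const ::
  "('a::euclidean_space \<Rightarrow> 'z \<Rightarrow> real) \<Rightarrow> ('a \<Rightarrow> 'z \<Rightarrow> 'a) \<Rightarrow> (nat \<Rightarrow> 'z) \<Rightarrow> nat
    \<Rightarrow> real \<Rightarrow> real \<Rightarrow> real \<Rightarrow> real \<Rightarrow> real \<Rightarrow> real \<Rightarrow> real \<Rightarrow> real" where
  "sgdm_rate_const f gf zs n L \<alpha> G p s q r =
    (let F0 = (1 / real n) * (\<Sum>i=1..n. f 0 (zs i));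
         D0 = norm ((1 / real n) *\<^sub>R (\<Sum>i=1..n. gf 0 (zs i)));
         B = max 1 (real n * G powr \<alpha>);
         d = real DIM('a)
     in 2 * (F0 / (q * r) + 2 * D0 / s + 2 * (L * q * r / s)
             + 2 * (G * p powr (1 - \<alpha>) * s powr ((\<alpha> - 1) / \<alpha>)) + r / 4 + L * q * r / 2)
        + 2 * d * B * sqrt (8 * s) * (2 * ln (2 * d) + 1))"

lemma lipschitz_const_nonneg:
  fixes D :: "'a::euclidean_space \<Rightarrow> 'b::real_normed_vector"
  assumes "\<And>u v. norm (D u - D v) \<le> L * norm (u - v)"
  shows "0 \<le> L"
proof -
  obtain b :: 'a where "b \<in> Basis" using nonempty_Basis by blast
  hence "norm b = 1" by simp
  thus ?thesis using order_trans[OF norm_ge_zero assms[of b 0]] by simp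
qed

lemma clipped_sgdm_smooth_empirical_risk:
  fixes f :: "'a::euclidean_space \<Rightarrow> 'z \<Rightarrow> real" and gf :: "'a \<Rightarrow> 'z \<Rightarrow> 'a"
  assumes n_pos: "n \<ge> 1" and "0 \<le> \<gamma>" "\<gamma> < 1" "0 < \<tau>1" "0 < \<tau>2" "0 < \<eta>"
    and f_nonneg: "\<And>w z. f w z \<ge> 0"
    and f_grad: "\<And>w z. ((\<lambda>v. f v z) has_derivative (\<lambda>h. gf w z \<bullet> h)) (at w)"
    and smooth: "\<And>u v. norm ((1 / real n) *\<^sub>R (\<Sum>i=1..n. gf u (zs i))
                          - (1 / real n) *\<^sub>R (\<Sum>i=1..n. gf v (zs i))) \<le> L * norm (u - v)"
  shows "clipped_sgdm_smooth gf zs n \<gamma> \<tau>1 \<tau>2 \<eta> (\<lambda>w. (1 / real n) * (\<Sum>i=1..n. f w (zs i))) L"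
proof -
  interpret clipped_sgdm gf zs n \<gamma> \<tau>1 \<tau>2 \<eta>
    by unfold_locales (use assms in auto)
  show ?thesis
  proof unfold_locales
    fix w
    have "((\<lambda>w. (1 / real n) * (\<Sum>i=1..n. f w (zs i)))
            has_derivative (\<lambda>h. (1 / real n) * (\<Sum>i=1..n. gf w (zs i) \<bullet> h))) (at w)"
      by (intro has_derivative_mult_right has_derivative_sum f_grad)
    moreover have "(\<lambda>h. (1 / real n) * (\<Sum>i=1..n. gf w (zs i) \<bullet> h)) = (\<lambda>h. gradF w \<bullet> h)"
      by (simp add: gradF_def fun_eq_iff inner_sum_left)
    ultimately show "((\<lambda>w. (1 / real n) * (\<Sum>i=1..n. f w (zs i))) has_derivative (\<lambda>h. gradF w \<bullet> h)) (at w)"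
      by simp
  qed (use lipschitz_const_nonneg[OF smooth] smooth f_nonneg in \<open>auto simp: gradF_def sum_nonneg\<close>)
qed

lemma clipped_sgdm_rate:
  fixes f :: "'a::euclidean_space \<Rightarrow> 'z \<Rightarrow> real" and gf :: "'a \<Rightarrow> 'z \<Rightarrow> 'a"
    and zs :: "nat \<Rightarrow> 'z" and n T :: nat and L \<alpha> G p s q r \<delta> \<gamma> \<tau>1 \<eta> \<tau>2 :: real
  assumes n_pos: "n \<ge> 1"
    and f_nonneg: "\<And>w z. f w z \<ge> 0"
    and f_grad: "\<And>w z. ((\<lambda>v. f v z) has_derivative (\<lambda>h. gf w z \<bullet> h)) (at w)"
    and smooth: "\<And>u v. norm ((1 / real n) *\<^sub>R (\<Sum>i=1..n. gf u (zs i))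
                          - (1 / real n) *\<^sub>R (\<Sum>i=1..n. gf v (zs i))) \<le> L * norm (u - v)"
    and \<alpha>: "1 < \<alpha>" "\<alpha> \<le> 2" and G: "G > 0" and pos: "p > 0" "s > 0" "q > 0" "r > 0"
    and T: "T \<ge> 2" and \<delta>: "0 < \<delta>" "\<delta> < 1"
    and \<gamma>: "\<gamma> = 1 - s * real T powr (- \<alpha> / (3 * \<alpha> - 2))" and \<gamma>_nonneg: "1 - \<gamma> \<le> 1"
    and \<tau>1: "\<tau>1 = p * G / (1 - \<gamma>) powr (1 / \<alpha>)"
    and \<eta>: "\<eta> = q * real T powr (- \<alpha> / (3 * \<alpha> - 2))"
    and \<tau>2: "\<tau>2 = r * real T powr (- (\<alpha> - 1) / (3 * \<alpha> - 2))"
    and moment: "\<forall>js \<in> set_pmf (index_law n T). \<forall>t \<in> {1..T}.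
            measure_pmf.expectation (pmf_of_set {1..n})
              (\<lambda>j. norm (gf (sgdm_iter gf zs \<gamma> \<tau>1 \<tau>2 (\<lambda>_. \<eta>) js t) (zs j)) powr \<alpha>)
            \<le> G powr \<alpha>"
  shows "measure_pmf.prob (index_law n T)
           {js. (1 / real T) * (\<Sum>t=1..T.
                  norm ((1 / real n) *\<^sub>R (\<Sum>i=1..n. gf (sgdm_iter gf zs \<gamma> \<tau>1 \<tau>2 (\<lambda>_. \<eta>) js t) (zs i))))
                \<le> sgdm_rate_const f gf zs n L \<alpha> G p s q r * ln (real T / \<delta>)
                  / real T powr ((\<alpha> - 1) / (3 * \<alpha> - 2))}
         \<ge> 1 - \<delta>"
proof -
  define FS where "FS w = (1 / real n) * (\<Sum>i=1..n. f w (zs i))" for w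
  have L: "0 \<le> L" by (rule lipschitz_const_nonneg[OF smooth])
  have "1 - \<gamma> > 0" using \<gamma> pos T by simp
  interpret clipped_sgdm_smooth gf zs n \<gamma> \<tau>1 \<tau>2 \<eta> FS L
    unfolding FS_def
    by (intro clipped_sgdm_smooth_empirical_risk n_pos f_nonneg f_grad smooth)
       (use \<gamma>_nonneg \<open>1 - \<gamma> > 0\<close> G pos T in \<open>auto simp: \<tau>1 \<eta> \<tau>2\<close>)
  have moment': "(\<Sum>j=1..n. norm (gf (W js t) (zs j)) powr \<alpha>) / real n \<le> G powr \<alpha>"
    if "js \<in> set_pmf (index_law n T)" "t \<in> {1..T}" for js t
    using moment that n_pos by (simp add: integral_pmf_of_set W_eq_sgdm_iter)
  define R where "R = FS 0 / (real T * \<eta> * \<tau>2) + 2 * norm (gradF 0) / (real T * (1 - \<gamma>))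
    + 2 * (L * \<eta> * \<tau>2 / (1 - \<gamma>)) + 2 * (G powr \<alpha> / \<tau>1 powr (\<alpha> - 1))
    + 2 * (real DIM('a) * sqrt (2 * (4 * (max 1 (real n * G powr \<alpha>))\<^sup>2 * (1 - \<gamma>))
             * ln (2 * real DIM('a) * real T / \<delta>)))
    + \<tau>2 / 4 + L * \<eta> * \<tau>2 / 2"
  have "R \<le> sgdm_rate_const f gf zs n L \<alpha> G p s q r * ln (real T / \<delta>) / real T powr ((\<alpha> - 1) / (3 * \<alpha> - 2))"
    unfolding R_def sgdm_rate_const_def Let_def FS_def[symmetric] gradF_def[symmetric]
    by (rule schedule_rate[OF \<alpha> T \<delta> pos(2,3,4,1) G L _ norm_ge_zero _ _ \<gamma> \<tau>1 \<eta> \<tau>2])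
       (use f_nonneg DIM_positive[where 'a = 'a] in \<open>auto simp: FS_def sum_nonneg\<close>)
  hence "{js. (1 / real T) * (\<Sum>t=1..T. norm (gradF (W js t))) \<le> R}
      \<subseteq> {js. (1 / real T) * (\<Sum>t=1..T. norm (gradF (W js t)))
              \<le> sgdm_rate_const f gf zs n L \<alpha> G p s q r * ln (real T / \<delta>)
                / real T powr ((\<alpha> - 1) / (3 * \<alpha> - 2))}"
    by auto
  with prob_avg_norm_gradF_le[where T = T, OF \<alpha>(1) moment' _ \<delta>, folded R_def] T
  show ?thesis unfolding W_eq_sgdm_iter gradF_def
    by (auto elim!: order_trans intro!: measure_pmf.finite_measure_mono)
qed

theorem theorem9:
  fixes f :: "'a::euclidean_space \<Rightarrow> 'z \<Rightarrow> real"
    and gf :: "'a \<Rightarrow> 'z \<Rightarrow> 'a"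
    and zs :: "nat \<Rightarrow> 'z"
    and n :: nat
    and L \<alpha> G p s q r :: real
  assumes n_pos: "n \<ge> 1"
    and f_nonneg: "\<And>w z. f w z \<ge> 0"
    and f_grad: "\<And>w z. ((\<lambda>v. f v z) has_derivative (\<lambda>h. gf w z \<bullet> h)) (at w)"
    and smooth: "\<And>u v. norm ((1 / real n) *\<^sub>R (\<Sum>i=1..n. gf u (zs i))
                          - (1 / real n) *\<^sub>R (\<Sum>i=1..n. gf v (zs i))) \<le> L * norm (u - v)"
    and alpha: "1 < \<alpha>" "\<alpha> \<le> 2"
    and G_pos: "G > 0"
    and params_pos: "p > 0" "s > 0" "q > 0" "r > 0"
  shows "\<exists>C. \<forall>T::nat. \<forall>\<delta>::real. T \<ge> 2 \<longrightarrow> 0 < \<delta> \<longrightarrow> \<delta> < 1 \<longrightarrow>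
     (let \<gamma> = 1 - s * real T powr (- \<alpha> / (3 * \<alpha> - 2));
          \<tau>1 = p * G / (1 - \<gamma>) powr (1 / \<alpha>);
          \<eta> = (\<lambda>t::nat. q * real T powr (- \<alpha> / (3 * \<alpha> - 2)));
          \<tau>2 = r * real T powr (- (\<alpha> - 1) / (3 * \<alpha> - 2));
          w = sgdm_iter gf zs \<gamma> \<tau>1 \<tau>2 \<eta>
      in 1 - \<gamma> \<le> 1 \<longrightarrow>
         (\<forall>js \<in> set_pmf (index_law n T). \<forall>t \<in> {1..T}.
            measure_pmf.expectation (pmf_of_set {1..n}) (\<lambda>j. norm (gf (w js t) (zs j)) powr \<alpha>)
              \<le> G powr \<alpha>) \<longrightarrow>
         measure_pmf.prob (index_law n T)
           {js. (1 / real T) * (\<Sum>t=1..T. norm ((1 / real n) *\<^sub>R (\<Sum>i=1..n. gf (w js t) (zs i))))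
                \<le> C * ln (real T / \<delta>) / real T powr ((\<alpha> - 1) / (3 * \<alpha> - 2))}
           \<ge> 1 - \<delta>)"
  unfolding Let_def
  by (intro exI[of _ "sgdm_rate_const f gf zs n L \<alpha> G p s q r"] allI impI clipped_sgdm_rate
        n_pos f_nonneg f_grad smooth alpha G_pos params_pos refl) assumption+

end
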